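(* Let $n\ge 4$ and consider the 2NC-TAP instance in which $T=K_{1,n-1}$ is a star with center $r$ and leaves $w_1,\dots,w_{n-1}$ (tree edges of cost $0$), and the links are the $n-1$ unit-cost edges $w_1w_2,w_2w_3,\dots,w_{n-2}w_{n-1},w_{n-1}w_1$ forming a cycle on the leaves. Then every 2-node connected spanning subgraph of this graph has cost at least $n-2$, while the vector $\hat x$ with $\hat x_e=1$ on tree edges and $\hat x_\ell=\frac12$ on each link is a feasible solution of the set-pairs LP of cost $\frac{n-1}{2}$. Hence the integrality ratio of the set-pairs LP for the min-cost 2NCSS problem is at least $\frac{2(n-2)}{n-1}=2-\frac{2}{n-1}$.
   Context: For a graph $G=(V,E)$ with nonnegative edge costs $c$, the set-pairs LP for the min-cost 2-node connected spanning subgraph (2NCSS) problem is: minimize $\sum_{e\in E}c_ex_e$ subject to $x(\delta(S))\ge 2$ for all $\emptyset\ne S\subsetneq V$; for every node $w\in V$ and every $\emptyset\ne S\subsetneq V\setminus\{w\}$, $\sum\{x_e: e=uv\in E,\ u\in S,\ v\in (V\setminus\{w\})\setminus S\}\ge 1$; and $0\le x\le 1$. Here $\delta(S)$ is the set of edges with exactly one end node in $S$ and $x(F)=\sum_{e\in F}x_e$. The integrality ratio is the ratio of the minimum cost of a 2-node connected spanning subgraph to the LP optimum. *)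

theory Defs
  imports Complex_Main
begin

text \<open>Undirected graphs: vertex set V :: 'a set, edges are two-element sets {u,v}.\<close>

definition adj_rel :: "'a set \<Rightarrow> 'a set set \<Rightarrow> ('a \<times> 'a) set" where
  "adj_rel V F = {(u, v). u \<in> V \<and> v \<in> V \<and> u \<noteq> v \<and> {u, v} \<in> F}"

definition connected_on :: "'a set \<Rightarrow> 'a set set \<Rightarrow> bool" where
  "connected_on V F \<longleftrightarrow> (\<forall>u\<in>V. \<forall>v\<in>V. (u, v) \<in> (adj_rel V F)\<^sup>*)"

definition two_node_connected :: "'a set \<Rightarrow> 'a set set \<Rightarrow> bool" where
  "two_node_connected V F \<longleftrightarrow>
     finite V \<and> card V \<ge> 3 \<and>
     (\<forall>e\<in>F. \<exists>u v. e = {u, v} \<and> u \<noteq> v \<and> u \<in> V \<and> v \<in> V) \<and>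
     connected_on V F \<and> (\<forall>w\<in>V. connected_on (V - {w}) F)"

definition is_2NCSS :: "'a set \<Rightarrow> 'a set set \<Rightarrow> 'a set set \<Rightarrow> bool" where
  "is_2NCSS V E F \<longleftrightarrow> F \<subseteq> E \<and> two_node_connected V F"

definition delta :: "'a set set \<Rightarrow> 'a set \<Rightarrow> 'a set set" where
  "delta E S = {e \<in> E. card (e \<inter> S) = 1}"

definition delta_w :: "'a set \<Rightarrow> 'a set set \<Rightarrow> 'a \<Rightarrow> 'a set \<Rightarrow> 'a set set" where
  "delta_w V E w S = {e \<in> E. \<exists>u v. e = {u, v} \<and> u \<in> S \<and> v \<in> (V - {w}) - S}"

definition set_pairs_feasible :: "'a set \<Rightarrow> 'a set set \<Rightarrow> ('a set \<Rightarrow> real) \<Rightarrow> bool" where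
  "set_pairs_feasible V E x \<longleftrightarrow>
     (\<forall>S. S \<noteq> {} \<and> S \<subset> V \<longrightarrow> sum x (delta E S) \<ge> 2) \<and>
     (\<forall>w\<in>V. \<forall>S. S \<noteq> {} \<and> S \<subset> V - {w} \<longrightarrow> sum x (delta_w V E w S) \<ge> 1) \<and>
     (\<forall>e\<in>E. 0 \<le> x e \<and> x e \<le> 1)"

definition lp_cost :: "'a set set \<Rightarrow> ('a set \<Rightarrow> real) \<Rightarrow> ('a set \<Rightarrow> real) \<Rightarrow> real" where
  "lp_cost E c x = (\<Sum>e\<in>E. c e * x e)"

definition opt_2NCSS :: "'a set \<Rightarrow> 'a set set \<Rightarrow> ('a set \<Rightarrow> real) \<Rightarrow> real" where
  "opt_2NCSS V E c = Inf {sum c F | F. is_2NCSS V E F}"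

definition opt_set_pairs_LP :: "'a set \<Rightarrow> 'a set set \<Rightarrow> ('a set \<Rightarrow> real) \<Rightarrow> real" where
  "opt_set_pairs_LP V E c = Inf {lp_cost E c x | x. set_pairs_feasible V E x}"

definition integrality_ratio :: "'a set \<Rightarrow> 'a set set \<Rightarrow> ('a set \<Rightarrow> real) \<Rightarrow> real" where
  "integrality_ratio V E c = opt_2NCSS V E c / opt_set_pairs_LP V E c"

text \<open>The instance: vertices 0..n-1, center r = 0, leaves w_i = i (1 \<le> i \<le> n-1).\<close>
definition star_edges :: "nat \<Rightarrow> nat set set" where
  "star_edges n = {{0, i} | i. 1 \<le> i \<and> i \<le> n - 1}"

definition cycle_links :: "nat \<Rightarrow> nat set set" where
  "cycle_links n = {{i, i + 1} | i. 1 \<le> i \<and> i \<le> n - 2} \<union> {{n - 1, 1}}"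

definition inst_edges :: "nat \<Rightarrow> nat set set" where
  "inst_edges n = star_edges n \<union> cycle_links n"

definition inst_cost :: "nat \<Rightarrow> nat set \<Rightarrow> real" where
  "inst_cost n e = (if e \<in> cycle_links n then 1 else 0)"

definition x_hat :: "nat \<Rightarrow> nat set \<Rightarrow> real" where
  "x_hat n e = (if e \<in> star_edges n then 1 else if e \<in> cycle_links n then 1/2 else 0)"

end

theory Submission
  imports Defs
begin

(*
  The LP is weak because of the star. Putting 1 on the star edges and 1/2 on the links
  satisfies every cut constraint: a cut of the whole graph either has all leaves on one side,
  and then contains at least two star edges, or splits the leaf cycle, and then contains two
  links and a star edge; after deleting a leaf, the centre is still adjacent to every other
  node; after deleting the centre, a cut of the leaves again contains two links of the cycle.
  Hence the LP optimum is at most (n-1)/2, and it is positive since links cost 1.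

  An integral solution, in contrast, has to stay connected after deleting the centre, and what
  remains is only the leaf cycle: if two links are missing, the arc between them is cut off
  from the rest. So at least n-2 of the n-1 links are bought.
*)

lemma connected_on_cut_edge:
  assumes "connected_on V F" "S \<subseteq> V" "u \<in> S" "v \<in> V - S"
  obtains p q where "p \<in> S" "q \<in> V - S" "{p, q} \<in> F"
proof -
  have "(u, v) \<in> (adj_rel V F)\<^sup>*" using assms unfolding connected_on_def by blast
  then have "v \<in> S \<or> (\<exists>p q. p \<in> S \<and> q \<in> V - S \<and> {p, q} \<in> F)"
    by (induction rule: rtrancl_induct) (use assms(3) in \<open>auto simp: adj_rel_def\<close>)
  then show ?thesis using that assms(4) by blast
qed

lemma sym_adj_rel: "sym (adj_rel V F)"
  unfolding adj_rel_def sym_def by (auto simp: insert_commute)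

lemma connected_on_hub:
  assumes "c \<in> V" "\<And>v. v \<in> V \<Longrightarrow> (c, v) \<in> (adj_rel V F)\<^sup>*"
  shows "connected_on V F"
  unfolding connected_on_def
proof (intro ballI)
  fix u v assume "u \<in> V" "v \<in> V"
  have "(u, c) \<in> (adj_rel V F)\<^sup>*"
    using symD[OF sym_rtrancl[OF sym_adj_rel] assms(2)[OF \<open>u \<in> V\<close>]] .
  then show "(u, v) \<in> (adj_rel V F)\<^sup>*" using assms(2)[OF \<open>v \<in> V\<close>] by (rule rtrancl_trans)
qed

lemma delta_wI: "{u, v} \<in> E \<Longrightarrow> u \<in> S \<Longrightarrow> v \<in> V - {w} - S \<Longrightarrow> {u, v} \<in> delta_w V E w S"
  unfolding delta_w_def by blast

lemma set_pairs_feasibleD: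
  assumes "set_pairs_feasible V E x"
  shows "S \<noteq> {} \<Longrightarrow> S \<subset> V \<Longrightarrow> 2 \<le> sum x (delta E S)"
    and "w \<in> V \<Longrightarrow> S \<noteq> {} \<Longrightarrow> S \<subset> V - {w} \<Longrightarrow> 1 \<le> sum x (delta_w V E w S)"
    and "e \<in> E \<Longrightarrow> 0 \<le> x e"
  using assms unfolding set_pairs_feasible_def by blast+

lemma integrality_ratio_ge:
  fixes c :: "'a set \<Rightarrow> real"
  assumes F: "is_2NCSS V E F" and opt: "\<And>F. is_2NCSS V E F \<Longrightarrow> a \<le> sum c F" and "0 \<le> a"
    and x: "set_pairs_feasible V E x" "lp_cost E c x \<le> b"
    and lp: "\<And>x. set_pairs_feasible V E x \<Longrightarrow> \<beta> \<le> lp_cost E c x" and "0 < \<beta>"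
  shows "a / b \<le> integrality_ratio V E c"
proof -
  have "a \<le> opt_2NCSS V E c"
    unfolding opt_2NCSS_def using F opt by (intro cInf_greatest) auto
  moreover have "\<beta> \<le> opt_set_pairs_LP V E c"
    unfolding opt_set_pairs_LP_def using x lp by (intro cInf_greatest) auto
  moreover have "opt_set_pairs_LP V E c \<le> b"
    unfolding opt_set_pairs_LP_def using x lp
    by (intro cInf_lower2[where x = "lp_cost E c x"] bdd_belowI[where m = \<beta>]) auto
  ultimately show ?thesis
    unfolding integrality_ratio_def using \<open>0 \<le> a\<close> \<open>0 < \<beta>\<close> by (intro frac_le) auto
qed

abbreviation leaves :: "nat \<Rightarrow> nat set" where
  "leaves n \<equiv> {1..n - 1}"

definition leaf_succ :: "nat \<Rightarrow> nat \<Rightarrow> nat" where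
  "leaf_succ n i = (if i = n - 1 then 1 else i + 1)"

definition cycle_link :: "nat \<Rightarrow> nat \<Rightarrow> nat set" where
  "cycle_link n i = {i, leaf_succ n i}"

lemma leaf_succ_in_leaves: "i \<in> leaves n \<Longrightarrow> leaf_succ n i \<in> leaves n"
  unfolding leaf_succ_def by auto

lemma leaf_succ_neq: "n \<ge> 3 \<Longrightarrow> i \<in> leaves n \<Longrightarrow> leaf_succ n i \<noteq> i"
  unfolding leaf_succ_def by auto

lemma leaf_succ_induct:
  assumes a: "a \<in> leaves n" "P a" and closed: "\<And>i. i \<in> leaves n \<Longrightarrow> P i \<Longrightarrow> P (leaf_succ n i)"
    and k: "k \<in> leaves n"
  shows "P k"
proof -
  have upward: "P k" if "P b" "1 \<le> b" "b \<le> k" "k \<le> n - 1" for b k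
    using that(3,1,2,4)
  proof (induction k rule: dec_induct)
    case (step m)
    then have "P (leaf_succ n m)" using closed by simp
    then show ?case using step unfolding leaf_succ_def by (simp split: if_splits)
  qed
  have "P (leaf_succ n (n - 1))" using upward[of a "n - 1"] a closed by auto
  then have "P 1" unfolding leaf_succ_def by simp
  then show "P k" using upward[of 1 k] k by simp
qed

lemma leaf_succ_exit:
  assumes "a \<in> leaves n" "P a" "b \<in> leaves n" "\<not> P b"
  obtains i where "i \<in> leaves n" "P i" "\<not> P (leaf_succ n i)"
  using leaf_succ_induct[of a n P b] assms by blast

lemma leaves_cut_links:
  assumes "a \<in> leaves n" "a \<in> S" "b \<in> leaves n" "b \<notin> S"
  obtains i j where "i \<in> leaves n" "i \<in> S" "leaf_succ n i \<notin> S"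
    and "j \<in> leaves n" "j \<notin> S" "leaf_succ n j \<in> S"
  using leaf_succ_exit[of a n "\<lambda>x. x \<in> S" b] leaf_succ_exit[of b n "\<lambda>x. x \<notin> S" a] assms
  by metis

lemma cycle_link_leaving_interval:
  assumes "i \<in> leaves n" "1 \<le> a" "a < b" "b \<le> n - 1"
    and "(i \<in> {a<..b}) \<noteq> (leaf_succ n i \<in> {a<..b})"
  shows "i = a \<or> i = b"
  using assms unfolding leaf_succ_def by (auto split: if_splits)

lemma cycle_link_inj: assumes n: "n \<ge> 4" shows "inj_on (cycle_link n) (leaves n)"
proof (rule inj_onI)
  fix i j assume "i \<in> leaves n" "j \<in> leaves n" "cycle_link n i = cycle_link n j"
  then show "i = j" using n unfolding cycle_link_def leaf_succ_def
    by (auto simp: doubleton_eq_iff split: if_splits)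
qed

lemma cycle_links_eq_image: "n \<ge> 3 \<Longrightarrow> cycle_links n = cycle_link n ` leaves n"
proof (intro equalityI subsetI)
  fix e assume "n \<ge> 3" "e \<in> cycle_links n"
  then show "e \<in> cycle_link n ` leaves n"
  proof (cases rule: UnE[OF \<open>e \<in> cycle_links n\<close>[unfolded cycle_links_def]])
    case 1
    then obtain i where "e = {i, i + 1}" "1 \<le> i" "i \<le> n - 2" by blast
    then have "e = cycle_link n i" "i \<in> leaves n"
      using \<open>n \<ge> 3\<close> unfolding cycle_link_def leaf_succ_def by auto
    then show ?thesis by blast
  next
    case 2
    then have "e = cycle_link n (n - 1)" unfolding cycle_link_def leaf_succ_def by auto
    then show ?thesis using \<open>n \<ge> 3\<close> by auto
  qed
next
  fix e assume "e \<in> cycle_link n ` leaves n"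
  then obtain i where i: "i \<in> leaves n" "e = cycle_link n i" by blast
  show "e \<in> cycle_links n"
  proof (cases "i = n - 1")
    case True
    then show ?thesis using i unfolding cycle_links_def cycle_link_def leaf_succ_def by auto
  next
    case False
    then have "e = {i, i + 1}" "1 \<le> i" "i \<le> n - 2"
      using i unfolding cycle_link_def leaf_succ_def by auto
    then show ?thesis unfolding cycle_links_def by blast
  qed
qed

lemma card_cycle_links: assumes "n \<ge> 4" shows "card (cycle_links n) = n - 1"
  using card_image[OF cycle_link_inj[OF assms]] assms by (simp add: cycle_links_eq_image)

lemma star_edges_eq_image: "star_edges n = (\<lambda>i. {0, i}) ` leaves n"
  unfolding star_edges_def by auto

lemma finite_inst_edges: "finite (inst_edges n)"
proof -
  have "cycle_links n \<subseteq> (\<lambda>i. {i, i + 1}) ` {1..n - 2} \<union> {{n - 1, 1}}"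
    unfolding cycle_links_def by auto
  then show ?thesis
    unfolding inst_edges_def star_edges_eq_image by (auto intro: finite_subset)
qed

lemma zero_notin_cycle_link: "i \<in> leaves n \<Longrightarrow> 0 \<notin> cycle_link n i"
  unfolding cycle_link_def leaf_succ_def by auto

lemma cycle_link_in_inst_edges: "n \<ge> 3 \<Longrightarrow> i \<in> leaves n \<Longrightarrow> cycle_link n i \<in> inst_edges n"
  by (simp add: inst_edges_def cycle_links_eq_image)

lemma star_edge_in_inst_edges: "i \<in> leaves n \<Longrightarrow> {0, i} \<in> inst_edges n"
  unfolding inst_edges_def star_edges_def by auto

lemma inst_edgesE [consumes 2, case_names star link]:
  assumes "e \<in> inst_edges n" "n \<ge> 3"
  obtains (star) i where "i \<in> leaves n" "e = {0, i}"
    | (link) i where "i \<in> leaves n" "e = cycle_link n i"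
  using assms unfolding inst_edges_def star_edges_eq_image cycle_links_eq_image[OF assms(2)] by blast

lemma sum_inst_cost: "finite F \<Longrightarrow> sum (inst_cost n) F = card (F \<inter> cycle_links n)"
  by (simp add: inst_cost_def sum.If_cases)

lemma two_missing_links_disconnect:
  assumes n: "n \<ge> 4" and F: "F \<subseteq> inst_edges n" "connected_on ({0..<n} - {0}) F"
    and a: "a \<in> leaves n" "cycle_link n a \<notin> F"
    and b: "b \<in> leaves n" "cycle_link n b \<notin> F" and "a < b"
  shows False
proof -
  let ?W = "{0..<n} - {0}" and ?S = "{a<..b}"
  have "?S \<subseteq> ?W" "b \<in> ?S" "1 \<in> ?W - ?S" using a b \<open>a < b\<close> by auto
  with F(2) obtain p q where pq: "p \<in> ?S" "q \<in> ?W - ?S" "{p, q} \<in> F"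
    by (rule connected_on_cut_edge)
  from pq(3) F(1) n have "{p, q} \<in> inst_edges n" "n \<ge> 3" by auto
  then show False
  proof (cases rule: inst_edgesE)
    case (star i)
    then show False using pq by (auto simp: doubleton_eq_iff)
  next
    case (link i)
    then have "(i \<in> ?S) \<noteq> (leaf_succ n i \<in> ?S)"
      using pq unfolding cycle_link_def by (auto simp: doubleton_eq_iff)
    then have "i = a \<or> i = b"
      using cycle_link_leaving_interval[OF link(1)] a b \<open>a < b\<close> by simp
    then show False using a b pq(3) link(2) by auto
  qed
qed

lemma inst_2NCSS_cost_ge:
  assumes n: "n \<ge> 4" and F: "is_2NCSS {0..<n} (inst_edges n) F"
  shows "sum (inst_cost n) F \<ge> real n - 2"
proof -
  have FE: "F \<subseteq> inst_edges n" and conn: "connected_on ({0..<n} - {0}) F"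
    using F n unfolding is_2NCSS_def two_node_connected_def by auto
  define M where "M = {i \<in> leaves n. cycle_link n i \<notin> F}"
  have "finite M" unfolding M_def by simp
  have "i = j" if "i \<in> M" "j \<in> M" for i j
    using that two_missing_links_disconnect[OF n FE conn, of i j]
      two_missing_links_disconnect[OF n FE conn, of j i]
    unfolding M_def by (cases i j rule: linorder_cases) auto
  then have "card M \<le> 1"
    using card_le_Suc0_iff_eq[OF \<open>finite M\<close>] by simp
  have "cycle_link n ` (leaves n - M) \<subseteq> F \<inter> cycle_links n"
    using n unfolding M_def by (auto simp: cycle_links_eq_image)
  then have "card (cycle_link n ` (leaves n - M)) \<le> card (F \<inter> cycle_links n)"
    using finite_inst_edges FE by (meson card_mono finite_Int finite_subset)
  moreover have "card (cycle_link n ` (leaves n - M)) = card (leaves n - M)"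
    using cycle_link_inj[OF n] by (meson Diff_subset card_image inj_on_subset)
  moreover have "card (leaves n - M) \<ge> n - 2"
    using diff_card_le_card_Diff[OF \<open>finite M\<close>, of "leaves n"] \<open>card M \<le> 1\<close> by simp
  ultimately have "card (F \<inter> cycle_links n) \<ge> n - 2" by linarith
  then show ?thesis
    using sum_inst_cost[OF finite_subset[OF FE finite_inst_edges]] n by simp
qed

lemma x_hat_star_edge: "i \<in> leaves n \<Longrightarrow> x_hat n {0, i} = 1"
  unfolding x_hat_def star_edges_def by auto

lemma x_hat_cycle_link: "n \<ge> 3 \<Longrightarrow> i \<in> leaves n \<Longrightarrow> x_hat n (cycle_link n i) = 1/2"
  using zero_notin_cycle_link[of i n]
  unfolding x_hat_def star_edges_def by (auto simp: cycle_links_eq_image)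

lemma sum_x_hat_mono: "B \<subseteq> D \<Longrightarrow> D \<subseteq> inst_edges n \<Longrightarrow> sum (x_hat n) B \<le> sum (x_hat n) D"
  by (rule sum_mono2) (auto simp: x_hat_def intro: finite_subset[OF _ finite_inst_edges])

lemma sum_x_hat_two_star_edges:
  "i \<in> leaves n \<Longrightarrow> j \<in> leaves n \<Longrightarrow> i \<noteq> j \<Longrightarrow> sum (x_hat n) {{0, i}, {0, j}} = 2"
  by (simp add: x_hat_star_edge doubleton_eq_iff)

lemma sum_x_hat_two_cycle_links:
  assumes "n \<ge> 4" "i \<in> leaves n" "j \<in> leaves n" "i \<noteq> j"
  shows "sum (x_hat n) {cycle_link n i, cycle_link n j} = 1"
proof -
  have "cycle_link n i \<noteq> cycle_link n j" using cycle_link_inj assms by (meson inj_onD)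
  then show ?thesis using assms by (simp add: x_hat_cycle_link)
qed

lemma cut_constraint_x_hat:
  assumes n: "n \<ge> 4" and S: "S \<noteq> {}" "S \<subset> {0..<n}"
  shows "sum (x_hat n) (delta (inst_edges n) S) \<ge> 2"
proof -
  let ?D = "delta (inst_edges n) S"
  have D_edges: "?D \<subseteq> inst_edges n" unfolding delta_def by blast
  have star: "{0, i} \<in> ?D" if "i \<in> leaves n" "(0 \<in> S) \<noteq> (i \<in> S)" for i
    using that star_edge_in_inst_edges[OF that(1)] unfolding delta_def
    by (cases "0 \<in> S") (auto simp: Int_insert_left)
  have link: "cycle_link n i \<in> ?D" if "i \<in> leaves n" "(i \<in> S) \<noteq> (leaf_succ n i \<in> S)" for i
    using that cycle_link_in_inst_edges[OF _ that(1)] n unfolding delta_def cycle_link_def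
    by (cases "i \<in> S") (auto simp: Int_insert_left)
  have leaves12: "1 \<in> leaves n" "2 \<in> leaves n" using n by auto
  consider (uniform) "\<forall>i\<in>leaves n. (0 \<in> S) \<noteq> (i \<in> S)"
    | (split) a b where "a \<in> leaves n" "a \<in> S" "b \<in> leaves n" "b \<notin> S"
  proof -
    have V: "{0..<n} = insert 0 (leaves n)" using n by auto
    show ?thesis
    proof (cases "\<exists>a\<in>leaves n. a \<in> S")
      case True
      show ?thesis
      proof (cases "\<exists>b\<in>leaves n. b \<notin> S")
        case False
        then have "0 \<notin> S" using S(2) V by auto
        then show ?thesis using that(1) False by blast
      qed (use True that(2) in blast)
    next
      case False
      then have "0 \<in> S" using S V by auto
      then show ?thesis using that(1) False by blast
    qed
  qed
  then show ?thesis
  proof cases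
    case uniform
    then have "{{0, 1}, {0, 2}} \<subseteq> ?D" using star leaves12 by blast
    then have "sum (x_hat n) {{0, 1}, {0, 2}} \<le> sum (x_hat n) ?D"
      using sum_x_hat_mono[OF _ D_edges] by blast
    then show ?thesis using sum_x_hat_two_star_edges[OF leaves12] by simp
  next
    case split
    then obtain i j where ij: "i \<in> leaves n" "i \<in> S" "leaf_succ n i \<notin> S"
      "j \<in> leaves n" "j \<notin> S" "leaf_succ n j \<in> S"
      by (rule leaves_cut_links)
    define k where "k = (if 0 \<in> S then b else a)"
    have k: "k \<in> leaves n" "(0 \<in> S) \<noteq> (k \<in> S)" using split unfolding k_def by auto
    have "insert {0, k} {cycle_link n i, cycle_link n j} \<subseteq> ?D"
      using star[OF k] link ij by auto
    then have "sum (x_hat n) (insert {0, k} {cycle_link n i, cycle_link n j}) \<le> sum (x_hat n) ?D"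
      using sum_x_hat_mono[OF _ D_edges] by blast
    moreover have "{0, k} \<notin> {cycle_link n i, cycle_link n j}"
      using zero_notin_cycle_link ij by blast
    moreover have "i \<noteq> j" using ij by blast
    ultimately show ?thesis
      using sum_x_hat_two_cycle_links[OF n ij(1,4)] x_hat_star_edge[OF k(1)] by simp
  qed
qed

lemma node_cut_constraint_x_hat:
  assumes n: "n \<ge> 4" and w: "w \<in> {0..<n}" and S: "S \<noteq> {}" "S \<subset> {0..<n} - {w}"
  shows "sum (x_hat n) (delta_w {0..<n} (inst_edges n) w S) \<ge> 1"
proof -
  let ?V = "{0..<n}"
  let ?D = "delta_w ?V (inst_edges n) w S"
  have D_edges: "?D \<subseteq> inst_edges n" unfolding delta_w_def by blast
  have V: "?V = insert 0 (leaves n)" using n by auto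
  show ?thesis
  proof (cases "w = 0")
    case True
    then obtain a b where "a \<in> leaves n" "a \<in> S" "b \<in> leaves n" "b \<notin> S"
      using S V by blast
    then obtain i j where ij: "i \<in> leaves n" "i \<in> S" "leaf_succ n i \<notin> S"
      "j \<in> leaves n" "j \<notin> S" "leaf_succ n j \<in> S"
      by (rule leaves_cut_links)
    have links: "cycle_link n i = {i, leaf_succ n i}" "cycle_link n j = {leaf_succ n j, j}"
      "cycle_link n i \<in> inst_edges n" "cycle_link n j \<in> inst_edges n"
      using cycle_link_in_inst_edges[of n] n ij unfolding cycle_link_def by auto
    have "leaf_succ n i \<in> ?V - {w} - S" "j \<in> ?V - {w} - S"
      using ij True V leaf_succ_in_leaves[OF ij(1)] by auto
    then have "{cycle_link n i, cycle_link n j} \<subseteq> ?D"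
      using delta_wI[of i _ "inst_edges n"] delta_wI[of "leaf_succ n j" j "inst_edges n"] links ij
      by auto
    then have "sum (x_hat n) {cycle_link n i, cycle_link n j} \<le> sum (x_hat n) ?D"
      using sum_x_hat_mono[OF _ D_edges] by blast
    moreover have "i \<noteq> j" using ij by blast
    ultimately show ?thesis using sum_x_hat_two_cycle_links[OF n ij(1,4)] by simp
  next
    case False
    obtain k where k: "k \<in> leaves n" "{0, k} \<in> ?D"
    proof (cases "0 \<in> S")
      case True
      obtain v where v: "v \<in> ?V - {w}" "v \<notin> S" using S(2) by blast
      then have "v \<in> leaves n" using True by (cases v) auto
      with v show ?thesis
        using that True S(2) delta_wI[OF star_edge_in_inst_edges] by blast
    next
      case zero_out: False
      obtain u where "u \<in> S" using S(1) by blast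
      have u: "u \<in> leaves n" using \<open>u \<in> S\<close> zero_out S(2) by (cases u) auto
      have e: "{u, 0} \<in> inst_edges n"
        using star_edge_in_inst_edges[OF u] by (simp add: insert_commute)
      have "0 \<in> ?V - {w} - S" using zero_out False w by auto
      from delta_wI[OF e \<open>u \<in> S\<close> this] have "{0, u} \<in> ?D" by (simp only: insert_commute)
      then show ?thesis using that u by blast
    qed
    then have "sum (x_hat n) {{0, k}} \<le> sum (x_hat n) ?D"
      using sum_x_hat_mono[OF _ D_edges] by blast
    then show ?thesis using x_hat_star_edge[OF k(1)] by simp
  qed
qed

lemma x_hat_feasible: "n \<ge> 4 \<Longrightarrow> set_pairs_feasible {0..<n} (inst_edges n) (x_hat n)"
  unfolding set_pairs_feasible_def
  using cut_constraint_x_hat node_cut_constraint_x_hat by (auto simp: x_hat_def)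

lemma lp_cost_inst_edges: "lp_cost (inst_edges n) (inst_cost n) x = sum x (cycle_links n)"
proof -
  have "lp_cost (inst_edges n) (inst_cost n) x = (\<Sum>e\<in>inst_edges n. if e \<in> cycle_links n then x e else 0)"
    unfolding lp_cost_def inst_cost_def by (intro sum.cong) auto
  also have "\<dots> = sum x (cycle_links n)"
    using finite_inst_edges[of n] by (simp add: sum.If_cases inst_edges_def Int_absorb1)
  finally show ?thesis .
qed

lemma lp_cost_x_hat:
  assumes n: "n \<ge> 4"
  shows "lp_cost (inst_edges n) (inst_cost n) (x_hat n) = (real n - 1) / 2"
proof -
  have "lp_cost (inst_edges n) (inst_cost n) (x_hat n) = (\<Sum>e\<in>cycle_links n. 1/2)"
    unfolding lp_cost_inst_edges using n
    by (intro sum.cong) (auto simp: cycle_links_eq_image x_hat_cycle_link)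
  also have "\<dots> = (real n - 1) / 2" using card_cycle_links[OF n] n by (simp add: of_nat_diff)
  finally show ?thesis .
qed

lemma lp_cost_feasible_ge_1:
  assumes n: "n \<ge> 4" and x: "set_pairs_feasible {0..<n} (inst_edges n) x"
  shows "lp_cost (inst_edges n) (inst_cost n) x \<ge> 1"
proof -
  (* after deleting the centre, the cut around leaf 1 consists of links, which cost 1 *)
  let ?D = "delta_w {0..<n} (inst_edges n) 0 {1}"
  have "{1} \<subseteq> {0..<n} - {0}" "2 \<in> {0..<n} - {0}" "2 \<notin> {1::nat}" using n by simp_all
  then have "{1} \<subset> {0..<n} - {0}" by blast
  then have "1 \<le> sum x ?D" using n by (intro set_pairs_feasibleD(2)[OF x]) simp_all
  also have "\<dots> \<le> sum x (cycle_links n)"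
  proof (rule sum_mono2)
    show "finite (cycle_links n)" using finite_inst_edges[of n] unfolding inst_edges_def by simp
    show "?D \<subseteq> cycle_links n"
    proof
      fix e assume "e \<in> ?D"
      then have "e \<in> inst_edges n" "0 \<notin> e" unfolding delta_w_def by auto
      then show "e \<in> cycle_links n" unfolding inst_edges_def star_edges_def by auto
    qed
    show "0 \<le> x e" if "e \<in> cycle_links n - ?D" for e
      using that by (intro set_pairs_feasibleD(3)[OF x]) (simp add: inst_edges_def)
  qed
  finally show ?thesis by (simp add: lp_cost_inst_edges)
qed

lemma connected_on_star:
  assumes "0 \<in> W" "W \<subseteq> {0..<n}"
  shows "connected_on W (inst_edges n)"
proof (rule connected_on_hub[OF assms(1)])
  fix v assume "v \<in> W"
  show "(0, v) \<in> (adj_rel W (inst_edges n))\<^sup>*"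
  proof (cases "v = 0")
    case False
    then have "(0, v) \<in> adj_rel W (inst_edges n)"
      using assms \<open>v \<in> W\<close> star_edge_in_inst_edges[of v n] unfolding adj_rel_def by auto
    then show ?thesis by blast
  qed simp
qed

lemma connected_on_leaves:
  assumes n: "n \<ge> 3"
  shows "connected_on (leaves n) (inst_edges n)"
proof (rule connected_on_hub)
  let ?R = "adj_rel (leaves n) (inst_edges n)"
  show "1 \<in> leaves n" using n by simp
  fix v assume "v \<in> leaves n"
  then have "1 \<le> v" "v \<le> n - 1" by auto
  then show "(1, v) \<in> ?R\<^sup>*"
  proof (induction v rule: dec_induct)
    case (step k)
    then have "{k, k + 1} = cycle_link n k" unfolding cycle_link_def leaf_succ_def by simp
    then have "(k, k + 1) \<in> ?R"
      using step n cycle_link_in_inst_edges[of n k] unfolding adj_rel_def by auto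
    then show ?case using step by simp
  qed simp
qed

lemma inst_edges_2NCSS: assumes n: "n \<ge> 4" shows "is_2NCSS {0..<n} (inst_edges n) (inst_edges n)"
proof -
  from n have "n \<ge> 3" by simp
  have edges: "\<exists>u v. e = {u, v} \<and> u \<noteq> v \<and> u \<in> {0..<n} \<and> v \<in> {0..<n}" if "e \<in> inst_edges n" for e
    using that \<open>n \<ge> 3\<close>
  proof (cases rule: inst_edgesE)
    case (star i)
    then show ?thesis using n by (intro exI[of _ 0] exI[of _ i]) auto
  next
    case (link i)
    then show ?thesis
      using leaf_succ_in_leaves[OF link(1)] leaf_succ_neq[of n i] n unfolding cycle_link_def by fastforce
  qed
  have "connected_on ({0..<n} - {w}) (inst_edges n)" if "w \<in> {0..<n}" for w
  proof (cases "w = 0")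
    case True
    moreover have "{0..<n} - {0} = leaves n" using n by auto
    ultimately show ?thesis using connected_on_leaves[of n] n by simp
  qed (use that in \<open>auto intro!: connected_on_star\<close>)
  then show ?thesis
    unfolding is_2NCSS_def two_node_connected_def
    using edges connected_on_star[of "{0..<n}" n] n by auto
qed

theorem mainTheorem8:
  fixes n :: nat
  assumes "n \<ge> 4"
  shows "(\<forall>F. is_2NCSS {0..<n} (inst_edges n) F \<longrightarrow> sum (inst_cost n) F \<ge> real n - 2)
     \<and> set_pairs_feasible {0..<n} (inst_edges n) (x_hat n)
     \<and> lp_cost (inst_edges n) (inst_cost n) (x_hat n) = (real n - 1) / 2
     \<and> integrality_ratio {0..<n} (inst_edges n) (inst_cost n) \<ge> 2 * (real n - 2) / (real n - 1)"
proof -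
  have lower: "\<forall>F. is_2NCSS {0..<n} (inst_edges n) F \<longrightarrow> sum (inst_cost n) F \<ge> real n - 2"
    using inst_2NCSS_cost_ge[OF assms] by blast
  have "2 * (real n - 2) / (real n - 1) = (real n - 2) / ((real n - 1) / 2)" by simp
  also have "\<dots> \<le> integrality_ratio {0..<n} (inst_edges n) (inst_cost n)"
    using assms
    by (intro integrality_ratio_ge[OF inst_edges_2NCSS inst_2NCSS_cost_ge _ x_hat_feasible _
          lp_cost_feasible_ge_1]) (simp_all add: lp_cost_x_hat)
  finally show ?thesis using lower x_hat_feasible[OF assms] lp_cost_x_hat[OF assms] by (intro conjI)
qed

end
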